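(* Let $F=(f_1,\dots,f_p)\in\mathbb{C}[X_1,\dots,X_n]^p$ be such that $\langle F\rangle$ is radical and $V(F)\subset\mathbb{C}^n$ is smooth and equidimensional of dimension $\delta=n-p$, and let $i\in\{1,\dots,\delta+1\}$. Suppose $F$ satisfies $\mathbf{H}_i(1)$, $\mathbf{H}_i(2)$, $\mathbf{H}_i(3)$, and that $\bm\sigma=(\sigma_1,\dots,\sigma_{i-1})\in\mathbb{C}^{i-1}$ satisfies $\mathbf{H}'_i$. Then for any $\bm u=(u_1,\dots,u_p)\in\mathbb{C}^p$, $0$ is a regular value of the $n+p$ polynomials \[X_1-\sigma_1,\dots,X_{i-1}-\sigma_{i-1},\ F,\ [L_1\cdots L_p]\cdot\mathrm{jac}(F,i),\ u_1L_1+\dots+u_pL_p-1,\] i.e. at every common zero in $\mathbb{C}^{n+p}$ their Jacobian with respect to $(X_1,\dots,X_n,L_1,\dots,L_p)$ has rank $n+p$.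
   Context: $L_1,\dots,L_p$ are new variables; $\mathrm{jac}(F,i)$ is the $p\times(n-i)$ matrix of partial derivatives $\partial f_k/\partial X_j$, $j=i+1,\dots,n$. $W(i,F)=\{\bm x: F(\bm x)=0,\ \mathrm{rank}(\mathrm{jac}(F,i)(\bm x))<p\}$. $\mathbf{H}_i(1)$: $W(i,F)$ is empty or $(i-1)$-equidimensional. $\mathbf{H}_i(2)$: at every $(\bm x,\bm\ell)$ with $\bm\ell\ne0$ cancelling $F,\ [L_1\cdots L_p]\cdot\mathrm{jac}(F,i)$, their Jacobian with respect to $(X,L)$ has rank $n+p-i$. $\mathbf{H}_i(3)$: $W(i,F)$ is empty or $\mathbb{C}[X_1,\dots,X_{i-1}]\to\mathbb{C}[X_1,\dots,X_n]/I(W(i,F))$ is injective and integral. $\mathbf{H}'_i$: at every common zero $(\bm x,\bm\ell)$ with $\bm\ell\ne0$ of the $n+p-1$ polynomials $X_1-\sigma_1,\dots,X_{i-1}-\sigma_{i-1},F,[L_1\cdots L_p]\cdot\mathrm{jac}(F,i)$, their Jacobian with respect to $(X,L)$ has rank $n+p-1$. *)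

theory Defs
  imports Complex_Main "Jordan_Normal_Form.DL_Rank"
begin

text \<open>Points of complex affine n-space: functions nat => complex vanishing at coordinates >= n.
  Coordinate j (0-based) corresponds to the paper's variable X_(j+1).\<close>
definition cpoints :: "nat \<Rightarrow> (nat \<Rightarrow> complex) set" where
  "cpoints n = {x. \<forall>j\<ge>n. x j = 0}"

text \<open>Polynomials in the variables X_1..X_n, viewed as polynomial functions
  (C is infinite, so this is isomorphic to the polynomial ring).\<close>
inductive_set polyfun :: "nat \<Rightarrow> ((nat \<Rightarrow> complex) \<Rightarrow> complex) set" for n :: nat where
  pconst: "(\<lambda>x. c) \<in> polyfun n"
| pvar: "j < n \<Longrightarrow> (\<lambda>x. x j) \<in> polyfun n"
| padd: "f \<in> polyfun n \<Longrightarrow> g \<in> polyfun n \<Longrightarrow> (\<lambda>x. f x + g x) \<in> polyfun n"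
| pmult: "f \<in> polyfun n \<Longrightarrow> g \<in> polyfun n \<Longrightarrow> (\<lambda>x. f x * g x) \<in> polyfun n"

definition gen_ideal :: "nat \<Rightarrow> nat \<Rightarrow> (nat \<Rightarrow> (nat \<Rightarrow> complex) \<Rightarrow> complex)
    \<Rightarrow> ((nat \<Rightarrow> complex) \<Rightarrow> complex) set" where
  "gen_ideal n p F = {h. \<exists>g. (\<forall>k<p. g k \<in> polyfun n) \<and> h = (\<lambda>x. \<Sum>k<p. g k x * F k x)}"

definition radical_in :: "nat \<Rightarrow> ((nat \<Rightarrow> complex) \<Rightarrow> complex) set \<Rightarrow> bool" where
  "radical_in n I \<longleftrightarrow> (\<forall>g\<in>polyfun n. \<forall>m. (\<lambda>x. g x ^ m) \<in> I \<longrightarrow> g \<in> I)"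

definition zero_set :: "nat \<Rightarrow> nat \<Rightarrow> (nat \<Rightarrow> (nat \<Rightarrow> complex) \<Rightarrow> complex)
    \<Rightarrow> (nat \<Rightarrow> complex) set" where
  "zero_set n p F = {x \<in> cpoints n. \<forall>k<p. F k x = 0}"

definition van_ideal :: "nat \<Rightarrow> (nat \<Rightarrow> complex) set \<Rightarrow> ((nat \<Rightarrow> complex) \<Rightarrow> complex) set" where
  "van_ideal n V = {g \<in> polyfun n. \<forall>x\<in>V. g x = 0}"

definition zclosed :: "nat \<Rightarrow> (nat \<Rightarrow> complex) set \<Rightarrow> bool" where
  "zclosed n Z \<longleftrightarrow> (\<exists>S \<subseteq> polyfun n. Z = {x \<in> cpoints n. \<forall>g\<in>S. g x = 0})"

definition zirreducible :: "nat \<Rightarrow> (nat \<Rightarrow> complex) set \<Rightarrow> bool" where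
  "zirreducible n Z \<longleftrightarrow> zclosed n Z \<and> Z \<noteq> {} \<and>
     (\<forall>A B. zclosed n A \<longrightarrow> zclosed n B \<longrightarrow> Z = A \<union> B \<longrightarrow> Z = A \<or> Z = B)"

definition zcomponent :: "nat \<Rightarrow> (nat \<Rightarrow> complex) set \<Rightarrow> (nat \<Rightarrow> complex) set \<Rightarrow> bool" where
  "zcomponent n V Z \<longleftrightarrow> Z \<subseteq> V \<and> zirreducible n Z \<and>
     (\<forall>Z'. zirreducible n Z' \<longrightarrow> Z \<subseteq> Z' \<longrightarrow> Z' \<subseteq> V \<longrightarrow> Z' = Z)"

definition irr_chain :: "nat \<Rightarrow> (nat \<Rightarrow> complex) set \<Rightarrow> nat \<Rightarrow> bool" where
  "irr_chain n V k \<longleftrightarrow> (\<exists>Z. (\<forall>l\<le>k. zirreducible n (Z l) \<and> Z l \<subseteq> V) \<and>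
     (\<forall>l<k. Z l \<subset> Z (Suc l)))"

definition zdim_eq :: "nat \<Rightarrow> (nat \<Rightarrow> complex) set \<Rightarrow> nat \<Rightarrow> bool" where
  "zdim_eq n V d \<longleftrightarrow> irr_chain n V d \<and> \<not> irr_chain n V (Suc d)"

definition equidim :: "nat \<Rightarrow> (nat \<Rightarrow> complex) set \<Rightarrow> nat \<Rightarrow> bool" where
  "equidim n V d \<longleftrightarrow> zclosed n V \<and> (\<forall>Z. zcomponent n V Z \<longrightarrow> zdim_eq n Z d)"

definition pd :: "nat \<Rightarrow> ((nat \<Rightarrow> complex) \<Rightarrow> complex) \<Rightarrow> (nat \<Rightarrow> complex) \<Rightarrow> complex" where
  "pd j f x = (THE D. ((\<lambda>t. f (x(j := t))) has_field_derivative D) (at (x j)))"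

definition crank :: "complex mat \<Rightarrow> nat" where
  "crank A = vec_space.rank (dim_row A) A"

definition jac_rank :: "nat \<Rightarrow> ((nat \<Rightarrow> complex) \<Rightarrow> complex) list \<Rightarrow> (nat \<Rightarrow> complex) \<Rightarrow> nat" where
  "jac_rank N gs z = crank (mat (length gs) N (\<lambda>(a, b). pd b (gs ! a) z))"

text \<open>V is smooth and equidimensional of dimension d: equidimensional, and at every point
  the tangent space (orthogonal of the gradients of I(V)) has dimension d.\<close>
definition smooth_equidim :: "nat \<Rightarrow> (nat \<Rightarrow> complex) set \<Rightarrow> nat \<Rightarrow> bool" where
  "smooth_equidim n V d \<longleftrightarrow> equidim n V d \<and>
     (\<forall>x\<in>V. \<exists>gs. set gs \<subseteq> van_ideal n V \<and> jac_rank n gs x + d = n \<and>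
        (\<forall>hs. set hs \<subseteq> van_ideal n V \<longrightarrow> jac_rank n hs x + d \<le> n))"

text \<open>In C^(n+p) the coordinates 0..n-1 are X_1..X_n and n..n+p-1 are L_1..L_p.
  The n-i polynomials [L_1 ... L_p] . jac(F,i) (paper's columns X_(i+1)..X_n, i.e.
  coordinates i..n-1).\<close>
definition Ljac :: "nat \<Rightarrow> nat \<Rightarrow> (nat \<Rightarrow> (nat \<Rightarrow> complex) \<Rightarrow> complex) \<Rightarrow> nat
    \<Rightarrow> ((nat \<Rightarrow> complex) \<Rightarrow> complex) list" where
  "Ljac n p F i = map (\<lambda>j z. \<Sum>k<p. z (n + k) * pd j (F k) z) [i..<n]"

definition Fpolys :: "nat \<Rightarrow> (nat \<Rightarrow> (nat \<Rightarrow> complex) \<Rightarrow> complex)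
    \<Rightarrow> ((nat \<Rightarrow> complex) \<Rightarrow> complex) list" where
  "Fpolys p F = map F [0..<p]"

definition Xsig :: "nat \<Rightarrow> (nat \<Rightarrow> complex) \<Rightarrow> ((nat \<Rightarrow> complex) \<Rightarrow> complex) list" where
  "Xsig i \<sigma> = map (\<lambda>k z. z k - \<sigma> k) [0..<i - 1]"

definition Lnonzero :: "nat \<Rightarrow> nat \<Rightarrow> (nat \<Rightarrow> complex) \<Rightarrow> bool" where
  "Lnonzero n p z \<longleftrightarrow> (\<exists>k<p. z (n + k) \<noteq> 0)"

definition W :: "nat \<Rightarrow> nat \<Rightarrow> (nat \<Rightarrow> (nat \<Rightarrow> complex) \<Rightarrow> complex) \<Rightarrow> nat
    \<Rightarrow> (nat \<Rightarrow> complex) set" where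
  "W n p F i = {x \<in> zero_set n p F.
      crank (mat p (n - i) (\<lambda>(k, j). pd (i + j) (F k) x)) < p}"

definition H1 :: "nat \<Rightarrow> nat \<Rightarrow> (nat \<Rightarrow> (nat \<Rightarrow> complex) \<Rightarrow> complex) \<Rightarrow> nat \<Rightarrow> bool" where
  "H1 n p F i \<longleftrightarrow> W n p F i = {} \<or> equidim n (W n p F i) (i - 1)"

definition H2 :: "nat \<Rightarrow> nat \<Rightarrow> (nat \<Rightarrow> (nat \<Rightarrow> complex) \<Rightarrow> complex) \<Rightarrow> nat \<Rightarrow> bool" where
  "H2 n p F i \<longleftrightarrow> (\<forall>z\<in>cpoints (n + p). Lnonzero n p z \<longrightarrow>
      (\<forall>g\<in>set (Fpolys p F @ Ljac n p F i). g z = 0) \<longrightarrow>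
      jac_rank (n + p) (Fpolys p F @ Ljac n p F i) z = n + p - i)"

text \<open>Injectivity and integrality of C[X_1..X_(i-1)] -> C[X]/I(W); modulo I(W) means
  equality as functions on W.\<close>
definition H3 :: "nat \<Rightarrow> nat \<Rightarrow> (nat \<Rightarrow> (nat \<Rightarrow> complex) \<Rightarrow> complex) \<Rightarrow> nat \<Rightarrow> bool" where
  "H3 n p F i \<longleftrightarrow> W n p F i = {} \<or>
     ((\<forall>g\<in>polyfun (i - 1). (\<forall>x\<in>W n p F i. g x = 0) \<longrightarrow> (\<forall>x\<in>cpoints n. g x = 0)) \<and>
      (\<forall>h\<in>polyfun n. \<exists>d a. 0 < d \<and> (\<forall>l<d. a l \<in> polyfun (i - 1)) \<and>
          (\<forall>x\<in>W n p F i. h x ^ d + (\<Sum>l<d. a l x * h x ^ l) = 0)))"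

definition H' :: "nat \<Rightarrow> nat \<Rightarrow> (nat \<Rightarrow> (nat \<Rightarrow> complex) \<Rightarrow> complex) \<Rightarrow> nat
    \<Rightarrow> (nat \<Rightarrow> complex) \<Rightarrow> bool" where
  "H' n p F i \<sigma> \<longleftrightarrow> (\<forall>z\<in>cpoints (n + p). Lnonzero n p z \<longrightarrow>
      (\<forall>g\<in>set (Xsig i \<sigma> @ Fpolys p F @ Ljac n p F i). g z = 0) \<longrightarrow>
      jac_rank (n + p) (Xsig i \<sigma> @ Fpolys p F @ Ljac n p F i) z = n + p - 1)"

end

theory Submission
  imports Defs
begin

text \<open>Each of the polynomials X_j - \<sigma>_j, f_k and [L_1 ... L_p] \<cdot> jac(F,i) is affine-linear in L
  with homogeneous part of degree 0 or 1, so by Euler's relation the vector (0, L) is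
  annihilated by their Jacobian at any common zero. At a common zero u \<cdot> L = 1, so L \<noteq> 0 and
  H'_i says this (n+p-1) \<times> (n+p) Jacobian has full rank; the derivative of u \<cdot> L - 1 along
  (0, L) is u \<cdot> L = 1, hence appending its gradient as a last row gives an invertible matrix.\<close>

lemma full_row_rank_imp_surj:
  fixes A :: "'a::field mat"
  assumes A: "A \<in> carrier_mat m nc" and rank: "vec_space.rank m A = m"
    and y: "y \<in> carrier_vec m"
  shows "\<exists>x\<in>carrier_vec nc. A *\<^sub>v x = y"
proof -
  interpret vec_space "TYPE('a)" m .
  obtain S where "maximal S (\<lambda>T. T \<subseteq> set (cols A) \<and> lin_indpt T)"
    using maximal_exists[of "\<lambda>T. T \<subseteq> set (cols A) \<and> lin_indpt T" "card (set (cols A))" "{}"]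
    by (meson List.finite_set card_mono empty_iff empty_subsetI finite_lin_indpt2 rev_finite_subset)
  then have S: "S \<subseteq> set (cols A)" "lin_indpt S" "card S = m"
    using rank_card_indpt[OF A] rank unfolding maximal_def by auto
  have S_carrier: "S \<subseteq> carrier_vec m" using S(1) A cols_dim by blast
  have "basis S"
    using dim_li_is_basis[OF fin_dim _ S_carrier S(2)] S(3) dim_is_n
    by (metis List.finite_set S(1) finite_subset order.refl)
  then have "y \<in> span S" using y unfolding basis_def by simp
  then have "y \<in> col_space A"
    unfolding col_space_def using span_is_monotone[OF S(1)] by blast
  then show ?thesis using col_space_eq[OF A] A by auto
qed

lemma full_row_rank_left_null_eq_0:
  fixes A :: "'a::field mat"
  assumes A: "A \<in> carrier_mat m nc" and rank: "vec_space.rank m A = m"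
    and w: "w \<in> carrier_vec m" and orth: "\<And>x. x \<in> carrier_vec nc \<Longrightarrow> w \<bullet> (A *\<^sub>v x) = 0"
  shows "w = 0\<^sub>v m"
proof (rule eq_vecI)
  fix a assume "a < dim_vec (0\<^sub>v m :: 'a vec)"
  then have a: "a < m" by simp
  obtain x where "x \<in> carrier_vec nc" "A *\<^sub>v x = unit_vec m a"
    using full_row_rank_imp_surj[OF A rank] a by (meson unit_vec_carrier)
  then show "w $ a = 0\<^sub>v m $ a"
    using orth a scalar_prod_right_unit by fastforce
qed (use w in simp)

lemma rank_extend_by_transverse_row:
  fixes f :: "nat \<times> nat \<Rightarrow> 'a::field"
  assumes rank: "vec_space.rank m (mat m (Suc m) f) = m"
    and tangent: "\<And>a. a < m \<Longrightarrow> (\<Sum>b<Suc m. f (a, b) * e b) = 0"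
    and transverse: "(\<Sum>b<Suc m. f (m, b) * e b) \<noteq> 0"
  shows "vec_space.rank (Suc m) (mat (Suc m) (Suc m) f) = Suc m"
proof -
  define M where "M = mat (Suc m) (Suc m) f"
  have M: "M \<in> carrier_mat (Suc m) (Suc m)" unfolding M_def by simp
  have "det M \<noteq> 0"
  proof
    \<comment> \<open>A left null vector w of M: pairing with e kills its last entry, and then the
      full row rank of the top m rows kills the rest.\<close>
    assume "det M = 0"
    then have "det (transpose_mat M) = 0" using det_transpose[OF M] by simp
    then obtain w where w: "w \<in> carrier_vec (Suc m)" "w \<noteq> 0\<^sub>v (Suc m)"
        and "transpose_mat M *\<^sub>v w = 0\<^sub>v (Suc m)"
      using det_0_iff_vec_prod_zero_field[of "transpose_mat M"] M by auto
    then have orth: "w \<bullet> (M *\<^sub>v x) = 0" if "x \<in> carrier_vec (Suc m)" for x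
      using transpose_vec_mult_scalar[OF M that w(1)] that by simp
    have split: "w \<bullet> (M *\<^sub>v x) = vec_first w m \<bullet> (mat m (Suc m) f *\<^sub>v x)
        + w $ m * (\<Sum>b<Suc m. f (m, b) * x $ b)" if "x \<in> carrier_vec (Suc m)" for x
      using that w(1)
      by (simp add: M_def scalar_prod_def vec_first_def lessThan_atLeast0[symmetric] mult.commute)
    have "w $ m = 0"
      using split[of "vec (Suc m) e"] orth[of "vec (Suc m) e"] tangent transverse
      by (simp add: scalar_prod_def lessThan_atLeast0[symmetric])
    moreover have "vec_first w m = 0\<^sub>v m"
      by (rule full_row_rank_left_null_eq_0[OF _ rank]) (use split orth \<open>w $ m = 0\<close> in auto)
    then have "w $ a = 0" if "a < m" for a
      using that by (metis index_vec index_zero_vec(1) vec_first_def)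
    ultimately have "w = 0\<^sub>v (Suc m)"
      using w(1) by (intro eq_vecI) (auto simp: less_Suc_eq)
    with w(2) show False ..
  qed
  then show ?thesis using vec_space.det_rank_iff[OF M] by (simp add: M_def)
qed

lemma jac_rank_append_transverse:
  assumes rank: "jac_rank N gs z = length gs" and N: "N = Suc (length gs)"
    and tangent: "\<And>g. g \<in> set gs \<Longrightarrow> (\<Sum>b<N. pd b g z * e b) = 0"
    and transverse: "(\<Sum>b<N. pd b h z * e b) \<noteq> 0"
  shows "jac_rank N (gs @ [h]) z = N"
proof -
  define f where "f = (\<lambda>(a, b). pd b ((gs @ [h]) ! a) z)"
  have "mat (length gs) N f = mat (length gs) N (\<lambda>(a, b). pd b (gs ! a) z)"
    by (rule eq_matI) (auto simp: f_def nth_append)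
  then have "vec_space.rank (length gs) (mat (length gs) (Suc (length gs)) f) = length gs"
    using rank N by (simp add: jac_rank_def crank_def)
  then have "vec_space.rank N (mat N N f) = N"
    unfolding N
    by (rule rank_extend_by_transverse_row)
       (use tangent transverse N in \<open>auto simp: f_def nth_append\<close>)
  then show ?thesis by (simp add: jac_rank_def crank_def f_def N)
qed

lemma sum_lower_block_zero:
  fixes f z :: "nat \<Rightarrow> 'a::comm_semiring_0"
  shows "(\<Sum>b<n + p. f b * (if b < n then 0 else z b)) = (\<Sum>k<p. z (n + k) * f (n + k))"
  by (induction p) (auto simp: mult.commute)

lemma jac_rank_append_transverse_to_L:
  assumes rank: "jac_rank (n + p) gs z = length gs" and len: "Suc (length gs) = n + p"
    and tangent: "\<And>g. g \<in> set gs \<Longrightarrow> (\<Sum>k<p. z (n + k) * pd (n + k) g z) = 0"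
    and transverse: "(\<Sum>k<p. z (n + k) * pd (n + k) h z) \<noteq> 0"
  shows "jac_rank (n + p) (gs @ [h]) z = n + p"
proof (rule jac_rank_append_transverse[where e = "\<lambda>b. if b < n then 0 else z b"])
  show "(\<Sum>b<n + p. pd b g z * (if b < n then 0 else z b)) = 0" if "g \<in> set gs" for g
    using tangent[OF that] by (simp add: sum_lower_block_zero)
  show "(\<Sum>b<n + p. pd b h z * (if b < n then 0 else z b)) \<noteq> 0"
    using transverse by (simp add: sum_lower_block_zero)
qed (use rank len in simp_all)

definition depends_only_below :: "nat \<Rightarrow> ((nat \<Rightarrow> 'a) \<Rightarrow> 'b) \<Rightarrow> bool" where
  "depends_only_below n f \<longleftrightarrow> (\<forall>x y. (\<forall>j<n. x j = y j) \<longrightarrow> f x = f y)"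

lemma depends_only_belowD:
  "depends_only_below n f \<Longrightarrow> (\<And>j. j < n \<Longrightarrow> x j = y j) \<Longrightarrow> f x = f y"
  unfolding depends_only_below_def by blast

lemma depends_only_below_const [simp]: "depends_only_below n (\<lambda>_. c)"
  by (simp add: depends_only_below_def)

lemma depends_only_below_upd:
  "depends_only_below n f \<Longrightarrow> n \<le> b \<Longrightarrow> f (x(b := t)) = f x"
  by (erule depends_only_belowD) simp

lemma polyfun_depends_only_below: "f \<in> polyfun n \<Longrightarrow> depends_only_below n f"
proof (induction rule: polyfun.induct)
  case (padd f g)
  then show ?case unfolding depends_only_below_def by metis
next
  case (pmult f g)
  then show ?case unfolding depends_only_below_def by metis
qed (auto simp: depends_only_below_def)

lemma pd_depends_only_below:
  assumes "depends_only_below n f" "j < n"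
  shows "depends_only_below n (pd j f)"
  unfolding depends_only_below_def pd_def
proof (intro allI impI)
  fix x y :: "nat \<Rightarrow> complex" assume xy: "\<forall>j<n. x j = y j"
  have "(\<lambda>t. f (x(j := t))) = (\<lambda>t. f (y(j := t)))"
    using xy by (intro ext depends_only_belowD[OF assms(1)]) auto
  moreover have "x j = y j" using xy assms(2) by blast
  ultimately show "(THE D. ((\<lambda>t. f (x(j := t))) has_field_derivative D) (at (x j)))
      = (THE D. ((\<lambda>t. f (y(j := t))) has_field_derivative D) (at (y j)))"
    by simp
qed

lemma pd_affine:
  assumes "\<And>t. g (z(b := t)) = \<alpha> * t + \<beta>"
  shows "pd b g z = \<alpha>"
proof -
  have "((\<lambda>t. g (z(b := t))) has_field_derivative \<alpha>) (at (z b))"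
    unfolding assms by (auto intro!: derivative_eq_intros)
  then show ?thesis unfolding pd_def by (blast intro: DERIV_unique)
qed

lemma pd_eq_0_if_depends_only_below:
  "depends_only_below n g \<Longrightarrow> n \<le> b \<Longrightarrow> pd b g z = 0"
  by (rule pd_affine[where \<beta> = "g z"]) (simp add: depends_only_below_upd)

lemma pd_linear_in_block:
  assumes c: "\<And>k. k < p \<Longrightarrow> depends_only_below n (c k)" and d: "depends_only_below n d"
    and k: "k < p"
  shows "pd (n + k) (\<lambda>z. (\<Sum>k<p. z (n + k) * c k z) + d z) z = c k z"
proof (rule pd_affine)
  fix t
  let ?z0 = "z(n + k := 0)"
  have c_upd: "c k' (z(n + k := t)) = c k' z" if "k' < p" for k'
    using c[OF that] by (simp add: depends_only_below_upd)
  have "(\<Sum>k'<p. (z(n + k := t)) (n + k') * c k' (z(n + k := t)))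
      = (\<Sum>k'<p. ?z0 (n + k') * c k' z + (if k' = k then t * c k' z else 0))"
    using c_upd by (intro sum.cong) auto
  also have "\<dots> = (\<Sum>k'<p. ?z0 (n + k') * c k' z) + t * c k z"
    using k by (simp add: sum.distrib)
  finally show "(\<Sum>k'<p. (z(n + k := t)) (n + k') * c k' (z(n + k := t))) + d (z(n + k := t))
      = c k z * t + ((\<Sum>k'<p. ?z0 (n + k') * c k' z) + d z)"
    using d by (simp add: depends_only_below_upd algebra_simps)
qed

lemma euler_linear_in_block:
  assumes "\<And>k. k < p \<Longrightarrow> depends_only_below n (c k)" "depends_only_below n d"
  shows "(\<Sum>k<p. z (n + k) * pd (n + k) (\<lambda>z. (\<Sum>k<p. z (n + k) * c k z) + d z) z)
      = (\<Sum>k<p. z (n + k) * c k z)"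
  by (intro sum.cong) (simp_all add: pd_linear_in_block[OF assms])

lemma euler_sum_affine_form:
  "(\<Sum>k<p. z (n + k) * pd (n + k) (\<lambda>z. (\<Sum>k<p. u k * z (n + k)) - 1) z)
    = (\<Sum>k<p. u k * z (n + k))"
proof -
  have "(\<lambda>z. (\<Sum>k<p. u k * z (n + k)) - 1)
      = (\<lambda>z. (\<Sum>k<p. z (n + k) * (\<lambda>_. u k) z) + (\<lambda>_. -1) z)"
    by (simp add: mult.commute)
  then show ?thesis
    using euler_linear_in_block[of p n "\<lambda>k _. u k" "\<lambda>_. -1" z] by (simp add: mult.commute)
qed

lemma euler_sum_generators_eq_0:
  assumes F_poly: "\<forall>k<p. F k \<in> polyfun n" and i: "i \<le> n"
    and g: "g \<in> set (Xsig i \<sigma> @ Fpolys p F @ Ljac n p F i)" and g_zero: "g z = 0"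
  shows "(\<Sum>k<p. z (n + k) * pd (n + k) g z) = 0"
proof -
  consider (X) k where "k < i - 1" "g = (\<lambda>z. z k - \<sigma> k)"
    | (F) k where "k < p" "g = F k"
    | (L) j where "j < n" "g = (\<lambda>z. (\<Sum>k<p. z (n + k) * pd j (F k) z) + (\<lambda>_. 0) z)"
    using g unfolding Xsig_def Fpolys_def Ljac_def by auto
  then show ?thesis
  proof cases
    case (X k)
    then have "depends_only_below n g" using i by (auto simp: depends_only_below_def)
    then show ?thesis by (simp add: pd_eq_0_if_depends_only_below)
  next
    case (F k)
    then have "depends_only_below n g" using F_poly by (simp add: polyfun_depends_only_below)
    then show ?thesis by (simp add: pd_eq_0_if_depends_only_below)
  next
    case (L j)
    have "depends_only_below n (pd j (F k))" if "k < p" for k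
      using F_poly that L(1) by (simp add: pd_depends_only_below polyfun_depends_only_below)
    then have "(\<Sum>k<p. z (n + k) * pd (n + k) g z) = (\<Sum>k<p. z (n + k) * pd j (F k) z)"
      unfolding L(2) by (intro euler_linear_in_block) simp_all
    also have "\<dots> = 0" using g_zero L(2) by simp
    finally show ?thesis .
  qed
qed

theorem corollary3:
  fixes n p i :: nat
    and F :: "nat \<Rightarrow> (nat \<Rightarrow> complex) \<Rightarrow> complex"
    and \<sigma> u :: "nat \<Rightarrow> complex"
  assumes F_poly: "\<forall>k<p. F k \<in> polyfun n"
    and radical: "radical_in n (gen_ideal n p F)"
    and smooth: "smooth_equidim n (zero_set n p F) (n - p)"
    and i_ge: "1 \<le> i" and i_le: "i \<le> (n - p) + 1" and p_le: "p \<le> n"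
    and H1: "H1 n p F i" and H2: "H2 n p F i" and H3: "H3 n p F i"
    and H': "H' n p F i \<sigma>"
  shows "\<forall>z\<in>cpoints (n + p).
     (\<forall>g\<in>set (Xsig i \<sigma> @ Fpolys p F @ Ljac n p F i
                 @ [\<lambda>z. (\<Sum>k<p. u k * z (n + k)) - 1]). g z = 0) \<longrightarrow>
     jac_rank (n + p) (Xsig i \<sigma> @ Fpolys p F @ Ljac n p F i
                 @ [\<lambda>z. (\<Sum>k<p. u k * z (n + k)) - 1]) z = n + p"
proof -
  define gs where "gs = Xsig i \<sigma> @ Fpolys p F @ Ljac n p F i"
  define h where "h = (\<lambda>z. (\<Sum>k<p. u k * z (n + k)) - 1)"
  have "jac_rank (n + p) (gs @ [h]) z = n + p"
    if z: "z \<in> cpoints (n + p)" and zero: "\<forall>g\<in>set (gs @ [h]). g z = 0" for z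
  proof (rule jac_rank_append_transverse_to_L)
    from zero have gs_zero: "\<forall>g\<in>set gs. g z = 0" and uL: "(\<Sum>k<p. u k * z (n + k)) = 1"
      by (auto simp: h_def)
    then show "(\<Sum>k<p. z (n + k) * pd (n + k) h z) \<noteq> 0"
      by (simp add: h_def euler_sum_affine_form)
    from uL have "Lnonzero n p z"
      unfolding Lnonzero_def
      by (metis (no_types, lifting) lessThan_iff mult_zero_right sum.neutral zero_neq_one)
    then have "1 \<le> p" and "i \<le> n" using i_le p_le by (auto simp: Lnonzero_def)
    then show len: "Suc (length gs) = n + p"
      using i_ge by (simp add: gs_def Xsig_def Fpolys_def Ljac_def)
    show "jac_rank (n + p) gs z = length gs"
      using H' z \<open>Lnonzero n p z\<close> gs_zero len unfolding H'_def gs_def by auto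
    show "(\<Sum>k<p. z (n + k) * pd (n + k) g z) = 0" if "g \<in> set gs" for g
      using euler_sum_generators_eq_0[OF F_poly \<open>i \<le> n\<close>] gs_zero that by (simp add: gs_def)
  qed
  then show ?thesis by (simp add: gs_def h_def)
qed

end
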